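(* Let $G$ be a locally compact groupoid. Then $G$ acts properly on itself (by right multiplication) if and only if $G^{(0)}$ is Hausdorff. In particular, a locally compact space, viewed as a groupoid consisting only of units, is proper if and only if it is Hausdorff.
   Context: Locally compact: every point has a compact (quasi-compact Hausdorff) neighbourhood; the space need not be Hausdorff. A continuous map is proper if closed with quasi-compact fibres; a groupoid $H$ is proper if $(r,s)\colon H\to H^{(0)}\times H^{(0)}$ is proper. The right action of $G$ on itself has momentum map $s$ and is $(h,g)\mapsto hg$; it is proper if the groupoid $G\rtimes G=\{(h,g):s(h)=r(g)\}$ (units $G$, range $(h,g)\mapsto h$, source $(h,g)\mapsto hg$) is proper. *)

theory Defs
  imports "HOL-Analysis.Analysis"
begin

text \<open>Locally compact in the sense of the paper: every point has a compact neighbourhood,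
  where "compact" means quasi-compact and Hausdorff (the space itself need not be Hausdorff).\<close>
definition lc_space :: "'a topology \<Rightarrow> bool" where
  "lc_space X \<longleftrightarrow> (\<forall>x \<in> topspace X. \<exists>U K. openin X U \<and> x \<in> U \<and> U \<subseteq> K \<and>
       compactin X K \<and> Hausdorff_space (subtopology X K))"

definition groupoid ::
  "'a set \<Rightarrow> 'a set \<Rightarrow> ('a \<Rightarrow> 'a) \<Rightarrow> ('a \<Rightarrow> 'a) \<Rightarrow> ('a \<Rightarrow> 'a \<Rightarrow> 'a) \<Rightarrow> ('a \<Rightarrow> 'a) \<Rightarrow> bool" where
  "groupoid Gs G0 r s m i \<longleftrightarrow>
     G0 \<subseteq> Gs \<and>
     (\<forall>g\<in>Gs. r g \<in> G0 \<and> s g \<in> G0) \<and>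
     (\<forall>u\<in>G0. r u = u \<and> s u = u) \<and>
     (\<forall>g\<in>Gs. \<forall>h\<in>Gs. s g = r h \<longrightarrow> m g h \<in> Gs \<and> r (m g h) = r g \<and> s (m g h) = s h) \<and>
     (\<forall>g\<in>Gs. \<forall>h\<in>Gs. \<forall>k\<in>Gs. s g = r h \<longrightarrow> s h = r k \<longrightarrow> m (m g h) k = m g (m h k)) \<and>
     (\<forall>g\<in>Gs. m (r g) g = g \<and> m g (s g) = g) \<and>
     (\<forall>g\<in>Gs. i g \<in> Gs \<and> r (i g) = s g \<and> s (i g) = r g \<and> m g (i g) = r g \<and> m (i g) g = s g)"

definition composable :: "'a set \<Rightarrow> ('a \<Rightarrow> 'a) \<Rightarrow> ('a \<Rightarrow> 'a) \<Rightarrow> ('a \<times> 'a) set" where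
  "composable Gs r s = {(g, h). g \<in> Gs \<and> h \<in> Gs \<and> s g = r h}"

text \<open>Topological groupoid (not necessarily Hausdorff); the topology T has carrier Gs,
  and G0 carries the subspace topology.\<close>
definition top_groupoid ::
  "'a topology \<Rightarrow> 'a set \<Rightarrow> ('a \<Rightarrow> 'a) \<Rightarrow> ('a \<Rightarrow> 'a) \<Rightarrow> ('a \<Rightarrow> 'a \<Rightarrow> 'a) \<Rightarrow> ('a \<Rightarrow> 'a) \<Rightarrow> bool" where
  "top_groupoid T G0 r s m i \<longleftrightarrow>
     groupoid (topspace T) G0 r s m i \<and>
     continuous_map T (subtopology T G0) r \<and>
     continuous_map T (subtopology T G0) s \<and>
     continuous_map (subtopology (prod_topology T T) (composable (topspace T) r s)) T
        (\<lambda>(g, h). m g h) \<and>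
     continuous_map T T i"

definition proper_groupoid ::
  "'h topology \<Rightarrow> 'u topology \<Rightarrow> ('h \<Rightarrow> 'u) \<Rightarrow> ('h \<Rightarrow> 'u) \<Rightarrow> bool" where
  "proper_groupoid H U r s \<longleftrightarrow> proper_map H (prod_topology U U) (\<lambda>x. (r x, s x))"

text \<open>The right action of G on itself is proper iff the groupoid G \<rtimes> G =
  {(h,g). s h = r g} (units G, range (h,g) \<mapsto> h, source (h,g) \<mapsto> hg) is proper.\<close>
definition right_action_proper ::
  "'a topology \<Rightarrow> ('a \<Rightarrow> 'a) \<Rightarrow> ('a \<Rightarrow> 'a) \<Rightarrow> ('a \<Rightarrow> 'a \<Rightarrow> 'a) \<Rightarrow> bool" where
  "right_action_proper T r s m \<longleftrightarrow>
     proper_groupoid (subtopology (prod_topology T T) (composable (topspace T) r s)) T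
       (\<lambda>(h, g). h) (\<lambda>(h, g). m h g)"

end

theory Submission
  imports Defs
begin

(* The shear map (h, g) \<mapsto> (h, hg) is a homeomorphism from G \<rtimes> G onto the kernel pair
   {(a, b). r a = r b} of the range map, with inverse (a, b) \<mapsto> (a, a\<inverse>b).  Hence the
   range-source map of G \<rtimes> G is proper iff this kernel pair is closed in G \<times> G.  Since r is a
   retraction of G onto G0, the kernel pair meets G0 \<times> G0 exactly in the diagonal of G0, so it
   is closed iff G0 is Hausdorff.  For a space of units the
   range-source map is the diagonal embedding, which is proper iff the space is Hausdorff. *)

lemma proper_map_homeomorphic_onto_subspace_iff_closedin:
  assumes "homeomorphic_map X (subtopology Y S) f" and "S \<subseteq> topspace Y"
  shows "proper_map X Y f \<longleftrightarrow> closedin Y S"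
proof -
  have image: "f ` topspace X = S"
    using homeomorphic_imp_surjective_map[OF assms(1)] assms(2) by auto
  have "embedding_map X Y f"
    unfolding embedding_map_def image by (rule assms(1))
  moreover have "inj_on f (topspace X)"
    using assms(1) by (rule homeomorphic_imp_injective_map)
  ultimately show ?thesis
    using injective_imp_proper_eq_closed_map embedding_imp_closed_map_eq image by metis
qed

definition kernel_pair :: "'a set \<Rightarrow> ('a \<Rightarrow> 'b) \<Rightarrow> ('a \<times> 'a) set" where
  "kernel_pair A q = {p \<in> A \<times> A. q (fst p) = q (snd p)}"

lemma closedin_kernel_pair_retraction_iff_Hausdorff:
  assumes q: "continuous_map X (subtopology X U) q" and retract: "\<And>u. u \<in> U \<Longrightarrow> q u = u"
    and U: "U \<subseteq> topspace X"
  shows "closedin (prod_topology X X) (kernel_pair (topspace X) q) \<longleftrightarrow>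
           Hausdorff_space (subtopology X U)"
proof
  assume "Hausdorff_space (subtopology X U)"
  then show "closedin (prod_topology X X) (kernel_pair (topspace X) q)"
    using closedin_continuous_maps_eq
      [OF _ continuous_map_compose[OF continuous_map_fst q] continuous_map_compose[OF continuous_map_snd q]]
    by (simp add: kernel_pair_def)
next
  assume "closedin (prod_topology X X) (kernel_pair (topspace X) q)"
  moreover have "(\<lambda>x. (x, x)) ` U = kernel_pair (topspace X) q \<inter> (U \<times> U)"
    using retract U by (auto simp: kernel_pair_def)
  ultimately have "closedin (subtopology (prod_topology X X) (U \<times> U)) ((\<lambda>x. (x, x)) ` U)"
    using closedin_subtopology by blast
  then show "Hausdorff_space (subtopology X U)"
    using U by (simp add: Hausdorff_space_closedin_diagonal subtopology_Times Int_absorb1)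
qed

lemma
  assumes "groupoid Gs G0 r s m i"
  shows groupoid_units_subset: "G0 \<subseteq> Gs"
    and groupoid_range_unit: "u \<in> G0 \<Longrightarrow> r u = u"
    and groupoid_mult_closed: "g \<in> Gs \<Longrightarrow> h \<in> Gs \<Longrightarrow> s g = r h \<Longrightarrow> m g h \<in> Gs"
    and groupoid_range_mult: "g \<in> Gs \<Longrightarrow> h \<in> Gs \<Longrightarrow> s g = r h \<Longrightarrow> r (m g h) = r g"
    and groupoid_assoc: "g \<in> Gs \<Longrightarrow> h \<in> Gs \<Longrightarrow> k \<in> Gs \<Longrightarrow> s g = r h \<Longrightarrow> s h = r k \<Longrightarrow>
                           m (m g h) k = m g (m h k)"
    and groupoid_left_unit: "g \<in> Gs \<Longrightarrow> m (r g) g = g"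
    and groupoid_inverse_closed: "g \<in> Gs \<Longrightarrow> i g \<in> Gs"
    and groupoid_range_inverse: "g \<in> Gs \<Longrightarrow> r (i g) = s g"
    and groupoid_source_inverse: "g \<in> Gs \<Longrightarrow> s (i g) = r g"
    and groupoid_right_inverse: "g \<in> Gs \<Longrightarrow> m g (i g) = r g"
    and groupoid_left_inverse: "g \<in> Gs \<Longrightarrow> m (i g) g = s g"
  using assms unfolding groupoid_def by blast+

lemma groupoid_inverse_mult_cancel:
  assumes G: "groupoid Gs G0 r s m i" and g: "g \<in> Gs" and h: "h \<in> Gs" and gh: "s g = r h"
  shows "m (i g) (m g h) = h"
proof -
  have "m (i g) (m g h) = m (m (i g) g) h"
    using groupoid_assoc[OF G] groupoid_inverse_closed[OF G] groupoid_source_inverse[OF G] g h gh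
    by metis
  also have "\<dots> = h"
    using groupoid_left_inverse[OF G g] groupoid_left_unit[OF G h] gh by simp
  finally show ?thesis .
qed

lemma groupoid_mult_inverse_cancel:
  assumes G: "groupoid Gs G0 r s m i" and g: "g \<in> Gs" and h: "h \<in> Gs" and gh: "r g = r h"
  shows "m g (m (i g) h) = h"
proof -
  have "m g (m (i g) h) = m (m g (i g)) h"
    using groupoid_assoc[OF G] groupoid_inverse_closed[OF G] groupoid_range_inverse[OF G]
      groupoid_source_inverse[OF G] g h gh
    by metis
  also have "\<dots> = h"
    using groupoid_right_inverse[OF G g] groupoid_left_unit[OF G h] gh by simp
  finally show ?thesis .
qed

lemma
  assumes G: "groupoid Gs G0 r s m i"
  shows groupoid_shear_in_kernel_pair:
      "(h, g) \<in> composable Gs r s \<Longrightarrow> (h, m h g) \<in> kernel_pair Gs r"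
    and groupoid_inverse_fst_composable:
      "(a, b) \<in> kernel_pair Gs r \<Longrightarrow> (i a, b) \<in> composable Gs r s"
    and groupoid_unshear_composable:
      "(a, b) \<in> kernel_pair Gs r \<Longrightarrow> (a, m (i a) b) \<in> composable Gs r s"
  using groupoid_mult_closed[OF G] groupoid_range_mult[OF G] groupoid_inverse_closed[OF G]
    groupoid_range_inverse[OF G] groupoid_source_inverse[OF G]
  by (auto simp: composable_def kernel_pair_def)

lemma top_groupoid_shear_homeomorphic_maps:
  assumes "top_groupoid T G0 r s m i"
  shows "homeomorphic_maps (subtopology (prod_topology T T) (composable (topspace T) r s))
           (subtopology (prod_topology T T) (kernel_pair (topspace T) r))
           (\<lambda>(h, g). (h, m h g)) (\<lambda>(a, b). (a, m (i a) b))"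
    (is "homeomorphic_maps ?D ?K ?shear ?unshear")
proof -
  have G: "groupoid (topspace T) G0 r s m i"
    and mult: "continuous_map ?D T (\<lambda>(h, g). m h g)"
    and inv: "continuous_map T T i"
    using assms unfolding top_groupoid_def by auto
  have inv_fst: "continuous_map ?K ?D (\<lambda>(a, b). (i a, b))"
  proof (rule continuous_map_into_subtopology)
    show "continuous_map ?K (prod_topology T T) (\<lambda>(a, b). (i a, b))"
      using continuous_map_pairedI[OF
          continuous_map_from_subtopology[OF continuous_map_compose[OF continuous_map_fst inv]]
          continuous_map_from_subtopology[OF continuous_map_snd]]
      by (simp add: case_prod_unfold o_def)
  qed (use groupoid_inverse_fst_composable[OF G] in \<open>auto simp: kernel_pair_def\<close>)
  have "continuous_map ?D ?K ?shear"
  proof (rule continuous_map_into_subtopology)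
    show "continuous_map ?D (prod_topology T T) ?shear"
      using continuous_map_pairedI[OF continuous_map_from_subtopology[OF continuous_map_fst] mult]
      by (simp add: case_prod_unfold)
  qed (use groupoid_shear_in_kernel_pair[OF G] in \<open>auto simp: composable_def\<close>)
  moreover have "continuous_map ?K ?D ?unshear"
  proof (rule continuous_map_into_subtopology)
    have "continuous_map ?K T (\<lambda>(a, b). m (i a) b)"
      using continuous_map_compose[OF inv_fst mult] by (simp add: o_def case_prod_unfold)
    then show "continuous_map ?K (prod_topology T T) ?unshear"
      using continuous_map_pairedI[OF continuous_map_from_subtopology[OF continuous_map_fst]]
      by (simp add: case_prod_unfold)
  qed (use groupoid_unshear_composable[OF G] in \<open>auto simp: kernel_pair_def\<close>)
  moreover have "?unshear (?shear p) = p" if "p \<in> topspace ?D" for p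
    using groupoid_inverse_mult_cancel[OF G] that by (auto simp: composable_def)
  moreover have "?shear (?unshear p) = p" if "p \<in> topspace ?K" for p
    using groupoid_mult_inverse_cancel[OF G] that by (auto simp: kernel_pair_def)
  ultimately show ?thesis
    unfolding homeomorphic_maps_def by blast
qed

lemma right_action_proper_iff_Hausdorff_units:
  assumes G: "top_groupoid T G0 r s m i"
  shows "right_action_proper T r s m \<longleftrightarrow> Hausdorff_space (subtopology T G0)"
proof -
  have groupoid: "groupoid (topspace T) G0 r s m i"
    and range: "continuous_map T (subtopology T G0) r"
    using G unfolding top_groupoid_def by blast+
  have "right_action_proper T r s m \<longleftrightarrow>
      proper_map (subtopology (prod_topology T T) (composable (topspace T) r s)) (prod_topology T T)
        (\<lambda>(h, g). (h, m h g))"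
    by (simp add: right_action_proper_def proper_groupoid_def case_prod_unfold)
  also have "\<dots> \<longleftrightarrow> closedin (prod_topology T T) (kernel_pair (topspace T) r)"
    by (rule proper_map_homeomorphic_onto_subspace_iff_closedin
        [OF homeomorphic_maps_imp_map[OF top_groupoid_shear_homeomorphic_maps[OF G]]])
      (auto simp: kernel_pair_def)
  also have "\<dots> \<longleftrightarrow> Hausdorff_space (subtopology T G0)"
    by (rule closedin_kernel_pair_retraction_iff_Hausdorff[OF range
          groupoid_range_unit[OF groupoid] groupoid_units_subset[OF groupoid]])
  finally show ?thesis .
qed

theorem proposition2p16:
  shows "(\<forall>(T :: 'a topology) G0 r s m i. top_groupoid T G0 r s m i \<and> lc_space T \<longrightarrow>
            (right_action_proper T r s m \<longleftrightarrow> Hausdorff_space (subtopology T G0)))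
       \<and> (\<forall>X :: 'b topology. lc_space X \<longrightarrow>
            (proper_groupoid X X (\<lambda>x. x) (\<lambda>x. x) \<longleftrightarrow> Hausdorff_space X))"
proof (intro conjI allI impI)
  fix T :: "'a topology" and G0 r s m i
  assume "top_groupoid T G0 r s m i \<and> lc_space T"
  then show "right_action_proper T r s m \<longleftrightarrow> Hausdorff_space (subtopology T G0)"
    using right_action_proper_iff_Hausdorff_units by blast
next
  fix X :: "'b topology"
  show "proper_groupoid X X (\<lambda>x. x) (\<lambda>x. x) \<longleftrightarrow> Hausdorff_space X"
    by (simp add: proper_groupoid_def)
qed

end
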